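(* Let $G$ be a finite nilpotent group, $f\in\mathrm{Aut}(G)$, $Q=\mathcal{Q}(G,f)$, and let $E$ be a finite connected cover of $Q$. Then $\mathrm{rad}(|E|)=\mathrm{rad}(|Q|)$.
   Context: A quandle is a set $Q$ with a binary operation $*$ such that every left translation $L_x:y\mapsto x*y$ is bijective, $x*(y*z)=(x*y)*(x*z)$ and $x*x=x$; $Q$ is connected if $\langle L_x:x\in Q\rangle$ is transitive. $\mathcal{Q}(G,f)$ is $G$ with $x*y=xf(x^{-1}y)$. A cover of $Q$ is a quandle $E$ with a surjective quandle homomorphism $\pi:E\to Q$ such that $\pi(u)=\pi(v)$ implies $L_u=L_v$ in $E$; it is a connected cover if $E$ is connected. For $n\in\mathbb{N}$, $\mathrm{rad}(n)$ is the product of the distinct primes dividing $n$. *)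

theory Defs
  imports "HOL-Algebra.Algebra" "HOL-Computational_Algebra.Primes"
begin

fun lower_central :: "('a, 'b) monoid_scheme \<Rightarrow> nat \<Rightarrow> 'a set" where
  "lower_central G 0 = carrier G"
| "lower_central G (Suc n) = generate G
     (\<Union>x \<in> carrier G. \<Union>y \<in> lower_central G n.
        { x \<otimes>\<^bsub>G\<^esub> y \<otimes>\<^bsub>G\<^esub> inv\<^bsub>G\<^esub> x \<otimes>\<^bsub>G\<^esub> inv\<^bsub>G\<^esub> y })"

definition nilpotent_group :: "('a, 'b) monoid_scheme \<Rightarrow> bool" where
  "nilpotent_group G \<longleftrightarrow> group G \<and> (\<exists>n. lower_central G n = {\<one>\<^bsub>G\<^esub>})"

definition quandle :: "'a set \<Rightarrow> ('a \<Rightarrow> 'a \<Rightarrow> 'a) \<Rightarrow> bool" where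
  "quandle Q op \<longleftrightarrow>
     (\<forall>x\<in>Q. bij_betw (op x) Q Q) \<and>
     (\<forall>x\<in>Q. \<forall>y\<in>Q. \<forall>z\<in>Q. op x (op y z) = op (op x y) (op x z)) \<and>
     (\<forall>x\<in>Q. op x x = x)"

text \<open>Left translations L_x, as elements of the group of bijections of Q.\<close>
definition left_translations :: "'a set \<Rightarrow> ('a \<Rightarrow> 'a \<Rightarrow> 'a) \<Rightarrow> ('a \<Rightarrow> 'a) set" where
  "left_translations Q op = {(\<lambda>y\<in>Q. op x y) | x. x \<in> Q}"

definition connected_quandle :: "'a set \<Rightarrow> ('a \<Rightarrow> 'a \<Rightarrow> 'a) \<Rightarrow> bool" where
  "connected_quandle Q op \<longleftrightarrow> quandle Q op \<and>
     (\<forall>a\<in>Q. \<forall>b\<in>Q. \<exists>\<sigma> \<in> generate (BijGroup Q) (left_translations Q op). \<sigma> a = b)"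

definition QGf_op :: "('a, 'b) monoid_scheme \<Rightarrow> ('a \<Rightarrow> 'a) \<Rightarrow> 'a \<Rightarrow> 'a \<Rightarrow> 'a" where
  "QGf_op G f x y = x \<otimes>\<^bsub>G\<^esub> f (inv\<^bsub>G\<^esub> x \<otimes>\<^bsub>G\<^esub> y)"

definition quandle_cover ::
  "'e set \<Rightarrow> ('e \<Rightarrow> 'e \<Rightarrow> 'e) \<Rightarrow> 'a set \<Rightarrow> ('a \<Rightarrow> 'a \<Rightarrow> 'a) \<Rightarrow> ('e \<Rightarrow> 'a) \<Rightarrow> bool" where
  "quandle_cover E opE Q opQ \<pi> \<longleftrightarrow>
     quandle E opE \<and> \<pi> ` E = Q \<and>
     (\<forall>u\<in>E. \<forall>v\<in>E. \<pi> (opE u v) = opQ (\<pi> u) (\<pi> v)) \<and>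
     (\<forall>u\<in>E. \<forall>v\<in>E. \<pi> u = \<pi> v \<longrightarrow> (\<forall>w\<in>E. opE u w = opE v w))"

definition connected_cover ::
  "'e set \<Rightarrow> ('e \<Rightarrow> 'e \<Rightarrow> 'e) \<Rightarrow> 'a set \<Rightarrow> ('a \<Rightarrow> 'a \<Rightarrow> 'a) \<Rightarrow> ('e \<Rightarrow> 'a) \<Rightarrow> bool" where
  "connected_cover E opE Q opQ \<pi> \<longleftrightarrow> quandle_cover E opE Q opQ \<pi> \<and> connected_quandle E opE"

definition rad :: "nat \<Rightarrow> nat" where
  "rad n = (\<Prod>p \<in> prime_factors n. p)"

end

theory Submission
  imports Defs
begin

text \<open>
  Let \<open>K\<close> be the group of displacements of \<open>E\<close> that fix every fibre of \<open>\<pi>\<close>. The displacement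
  group of \<open>Q(G,f)\<close> acts on \<open>G\<close> by left multiplications, hence freely, so \<open>K\<close> is transitive on
  each fibre. It also commutes with \<open>Inn(E)\<close>, so by connectedness it acts semiregularly, it is
  abelian, and \<open>|E| = |G| |K|\<close>. The transfer of \<open>Inn(E)\<close> into the central subgroup \<open>K\<close> sends
  \<open>k \<in> K\<close> to \<open>k^|G|\<close>, and it is trivial on \<open>Dis(E)\<close> because all left translations are
  conjugate and thus have the same transfer. So the exponent of \<open>K\<close> divides \<open>|G|\<close>, and by
  Cauchy's theorem every prime divisor of \<open>|K|\<close> divides \<open>|G|\<close>.
\<close>

section \<open>Finite groups\<close>

lemma BijGroup_apply_closed: "s \<in> carrier (BijGroup S) \<Longrightarrow> x \<in> S \<Longrightarrow> s x \<in> S"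
  by (auto simp: BijGroup_def Bij_def bij_betw_def)

lemma BijGroup_mult_apply:
  "s \<in> carrier (BijGroup S) \<Longrightarrow> t \<in> carrier (BijGroup S) \<Longrightarrow> x \<in> S \<Longrightarrow>
   (s \<otimes>\<^bsub>BijGroup S\<^esub> t) x = s (t x)"
  by (simp add: BijGroup_def compose_def)

lemma BijGroup_one_apply: "x \<in> S \<Longrightarrow> \<one>\<^bsub>BijGroup S\<^esub> x = x"
  by (simp add: BijGroup_def)

lemma BijGroup_inv:
  "s \<in> carrier (BijGroup S) \<Longrightarrow> inv\<^bsub>BijGroup S\<^esub> s = restrict (inv_into S s) S"
  using inv_BijGroup by (simp add: BijGroup_def)

lemma BijGroup_apply_inv_apply:
  assumes "s \<in> carrier (BijGroup S)" "x \<in> S"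
  shows "s ((inv\<^bsub>BijGroup S\<^esub> s) x) = x"
  using assms
  by (simp add: BijGroup_inv) (simp add: f_inv_into_f BijGroup_def Bij_def bij_betw_def)

lemma BijGroup_inv_apply_apply:
  assumes "s \<in> carrier (BijGroup S)" "x \<in> S"
  shows "(inv\<^bsub>BijGroup S\<^esub> s) (s x) = x"
  using assms
  by (simp add: BijGroup_inv BijGroup_apply_closed) (simp add: inv_into_f_f BijGroup_def Bij_def bij_betw_def)

lemma BijGroup_eqI:
  "s \<in> carrier (BijGroup S) \<Longrightarrow> t \<in> carrier (BijGroup S) \<Longrightarrow> (\<And>x. x \<in> S \<Longrightarrow> s x = t x) \<Longrightarrow> s = t"
  by (auto simp: BijGroup_def Bij_def intro: extensionalityI)

lemma finite_carrier_BijGroup: "finite S \<Longrightarrow> finite (carrier (BijGroup S))"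
  by (rule finite_subset[of _ "S \<rightarrow>\<^sub>E S"])
    (auto simp: BijGroup_def Bij_def bij_betw_def finite_PiE extensional_def)

lemma (in group) finite_subgroupI:
  assumes "finite (carrier G)" and "H \<subseteq> carrier G" and "\<one> \<in> H"
    and mult: "\<And>x y. x \<in> H \<Longrightarrow> y \<in> H \<Longrightarrow> x \<otimes> y \<in> H"
  shows "subgroup H G"
proof
  fix x assume x: "x \<in> H"
  then have xG: "x \<in> carrier G" using assms(2) by blast
  have pow_in: "x [^] n \<in> H" for n :: nat
    by (induction n) (simp_all add: assms(3) mult x)
  have "order G \<noteq> 0"
    using assms(1) by (simp add: order_gt_0_iff_finite)
  then have "x [^] (order G - 1) \<otimes> x = x [^] order G"
    by (metis Suc_pred' gr0I nat_pow_Suc)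
  then have "inv x = x [^] (order G - 1)"
    using xG by (simp add: inv_equality pow_order_eq_1)
  then show "inv x \<in> H" using pow_in by simp
qed (use assms in auto)

lemma (in group) generate_subset_of_mult_closed:
  assumes "finite (carrier G)" and "A \<subseteq> H" and "H \<subseteq> carrier G" and "\<one> \<in> H"
    and "\<And>x y. x \<in> H \<Longrightarrow> y \<in> H \<Longrightarrow> x \<otimes> y \<in> H"
  shows "generate G A \<subseteq> H"
  using assms by (intro generate_subgroup_incl finite_subgroupI)

lemma (in group) prime_dvd_order_dvd_exponent:
  assumes fin: "finite (carrier G)" and exp: "\<And>x. x \<in> carrier G \<Longrightarrow> x [^] n = \<one>"
    and p: "Factorial_Ring.prime p" and "p dvd order G"
  shows "p dvd n"
proof -
  obtain m where "order G = p ^ 1 * m" using \<open>p dvd order G\<close> by auto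
  then obtain H where H: "subgroup H G" "card H = p"
    using sylow_thm[OF p is_group _ fin, of 1 m] by auto
  interpret H: group "G\<lparr>carrier := H\<rparr>" using subgroup.subgroup_is_group[OF H(1) is_group] .
  have "\<not> H \<subseteq> {\<one>}"
    using H(2) prime_gt_1_nat[OF p] card_mono[of "{\<one>}" H] by auto
  then obtain h where h: "h \<in> H" "h \<noteq> \<one>" by blast
  then have hG: "h \<in> carrier G" using subgroup.subset[OF H(1)] by blast
  have "h [^] p = \<one>"
    using H.pow_order_eq_1[of h] h(1) H(2) by (simp add: order_def nat_pow_consistent[symmetric])
  then have "ord h dvd p" using pow_eq_id[OF hG] by simp
  moreover have "ord h \<noteq> 1" using ord_eq_1[OF hG] h(2) by simp
  ultimately have "ord h = p" using p prime_nat_iff by blast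
  then show ?thesis using exp[OF hG] pow_eq_id[OF hG] by simp
qed

lemma rad_mult_eq:
  assumes "a \<noteq> 0" "b \<noteq> 0" and "\<And>p. Factorial_Ring.prime p \<Longrightarrow> p dvd b \<Longrightarrow> p dvd a"
  shows "rad (a * b) = rad a"
proof -
  have "prime_factors b \<subseteq> prime_factors a"
    using assms by (auto simp: in_prime_factors_iff)
  then show ?thesis
    using assms(1,2) by (simp add: rad_def prime_factors_product Un_absorb2)
qed

section \<open>The quandle \<open>Q(G,f)\<close>\<close>

lemma QGf_op_closed:
  fixes G (structure)
  assumes "group G" and "f \<in> carrier G \<rightarrow> carrier G" and "a \<in> carrier G" "x \<in> carrier G"
  shows "QGf_op G f a x \<in> carrier G"
proof -
  interpret group G by fact
  show ?thesis
    unfolding QGf_op_def using assms funcset_mem[OF assms(2)] by simp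
qed

lemma QGf_op_cancel:
  fixes G (structure)
  assumes "group G" and f: "f \<in> carrier G \<rightarrow> carrier G" "inj_on f (carrier G)"
    and "a \<in> carrier G" "x \<in> carrier G" "y \<in> carrier G"
    and "QGf_op G f a x = QGf_op G f a y"
  shows "x = y"
proof -
  interpret group G by fact
  have ax: "inv a \<otimes> x \<in> carrier G" and ay: "inv a \<otimes> y \<in> carrier G"
    using assms by simp_all
  have "a \<otimes> f (inv a \<otimes> x) = a \<otimes> f (inv a \<otimes> y)"
    using assms(7) by (simp add: QGf_op_def)
  then have "f (inv a \<otimes> x) = f (inv a \<otimes> y)"
    using l_cancel[OF _ funcset_mem[OF f(1) ax] funcset_mem[OF f(1) ay] \<open>a \<in> carrier G\<close>] by blast
  then have "inv a \<otimes> x = inv a \<otimes> y"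
    using inj_onD[OF f(2) _ ax ay] by blast
  then show ?thesis using assms by simp
qed

text \<open>In \<open>Q(G,f)\<close> the displacement \<open>L\<^sub>a L\<^sub>b\<^sup>-\<^sup>1\<close> is left multiplication by \<open>(a*b) b\<^sup>-\<^sup>1\<close>.\<close>
lemma QGf_op_displacement:
  fixes G (structure)
  assumes "group G" and f: "f \<in> hom G G"
    and "a \<in> carrier G" "b \<in> carrier G" "w \<in> carrier G"
  shows "QGf_op G f a w = (QGf_op G f a b \<otimes> inv b) \<otimes> QGf_op G f b w"
proof -
  interpret group G by fact
  have "b \<otimes> (inv b \<otimes> w) = w"
    using assms by (simp add: m_assoc[symmetric])
  then have "inv a \<otimes> w = (inv a \<otimes> b) \<otimes> (inv b \<otimes> w)"
    using assms by (simp add: m_assoc)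
  then have "f (inv a \<otimes> w) = f (inv a \<otimes> b) \<otimes> f (inv b \<otimes> w)"
    using assms by (simp add: hom_mult[OF f])
  then show ?thesis
    using assms hom_in_carrier[OF f]
    by (simp add: QGf_op_def m_assoc) (simp add: m_assoc[symmetric])
qed

section \<open>Inner and displacement groups of a finite quandle\<close>

locale finite_quandle =
  fixes E :: "'e set" and op :: "'e \<Rightarrow> 'e \<Rightarrow> 'e"
  assumes quandle: "quandle E op" and finite: "finite E"
begin

abbreviation Sym where "Sym \<equiv> BijGroup E"

sublocale Sym: group Sym by (rule group_BijGroup)

lemma finite_Sym: "finite (carrier Sym)"
  using finite by (rule finite_carrier_BijGroup)

lemma op_bij: "a \<in> E \<Longrightarrow> bij_betw (op a) E E"
  using quandle[unfolded quandle_def, THEN conjunct1] by blast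

lemma self_distrib: "a \<in> E \<Longrightarrow> x \<in> E \<Longrightarrow> y \<in> E \<Longrightarrow> op a (op x y) = op (op a x) (op a y)"
  using quandle[unfolded quandle_def, THEN conjunct2, THEN conjunct1] by blast

lemma idempotent: "a \<in> E \<Longrightarrow> op a a = a"
  using quandle[unfolded quandle_def, THEN conjunct2, THEN conjunct2] by blast

lemma op_closed: "a \<in> E \<Longrightarrow> x \<in> E \<Longrightarrow> op a x \<in> E"
  using op_bij bij_betw_apply by fast

definition L :: "'e \<Rightarrow> 'e \<Rightarrow> 'e" where "L a = (\<lambda>x\<in>E. op a x)"

lemma L_apply: "x \<in> E \<Longrightarrow> L a x = op a x"
  by (simp add: L_def)

lemma L_in_Sym: "a \<in> E \<Longrightarrow> L a \<in> carrier Sym"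
  by (simp add: L_def BijGroup_def Bij_def op_bij)

lemma L_fixes: "a \<in> E \<Longrightarrow> L a a = a"
  by (simp add: L_apply idempotent)

lemma inv_L_fixes: "a \<in> E \<Longrightarrow> (inv\<^bsub>Sym\<^esub> L a) a = a"
  using BijGroup_inv_apply_apply[OF L_in_Sym, of a a] by (simp add: L_fixes)

definition Inn where "Inn = generate Sym (L ` E)"

definition Dis where "Dis = generate Sym {L a \<otimes>\<^bsub>Sym\<^esub> inv\<^bsub>Sym\<^esub> L b | a b. a \<in> E \<and> b \<in> E}"

lemma subgroup_Inn: "subgroup Inn Sym"
  unfolding Inn_def by (rule Sym.generate_is_subgroup) (use L_in_Sym in blast)

lemma subgroup_Dis: "subgroup Dis Sym"
  unfolding Dis_def by (rule Sym.generate_is_subgroup) (use L_in_Sym in blast)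

lemma L_in_Inn: "a \<in> E \<Longrightarrow> L a \<in> Inn"
  unfolding Inn_def by (rule generate.incl) blast

lemma Inn_in_Sym: "s \<in> Inn \<Longrightarrow> s \<in> carrier Sym"
  using subgroup.subset[OF subgroup_Inn] by blast

lemma Dis_subset_Inn: "Dis \<subseteq> Inn"
  unfolding Dis_def
proof (rule Sym.generate_subgroup_incl[OF _ subgroup_Inn], clarify)
  fix a b assume "a \<in> E" "b \<in> E"
  then show "L a \<otimes>\<^bsub>Sym\<^esub> inv\<^bsub>Sym\<^esub> L b \<in> Inn"
    using subgroup_Inn L_in_Inn by (meson subgroup.m_closed subgroup.m_inv_closed)
qed

lemma Dis_in_Sym: "d \<in> Dis \<Longrightarrow> d \<in> carrier Sym"
  using Dis_subset_Inn Inn_in_Sym by blast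

lemma Inn_automorphism:
  assumes "s \<in> Inn" "x \<in> E" "y \<in> E"
  shows "s (op x y) = op (s x) (s y)"
proof -
  have "Inn \<subseteq> {s \<in> carrier Sym. \<forall>x\<in>E. \<forall>y\<in>E. s (op x y) = op (s x) (s y)}"
    unfolding Inn_def
  proof (rule Sym.generate_subset_of_mult_closed[OF finite_Sym])
    show "L ` E \<subseteq> {s \<in> carrier Sym. \<forall>x\<in>E. \<forall>y\<in>E. s (op x y) = op (s x) (s y)}"
    proof (clarify, intro conjI ballI)
      fix a x y assume a: "a \<in> E" and xy: "x \<in> E" "y \<in> E"
      show "L a \<in> carrier Sym" using L_in_Sym[OF a] .
      have "L a (op x y) = op a (op x y)" using xy by (simp add: L_apply op_closed)
      also have "\<dots> = op (op a x) (op a y)" using a xy by (rule self_distrib)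
      finally show "L a (op x y) = op (L a x) (L a y)" using xy by (simp add: L_apply)
    qed
    show "\<one>\<^bsub>Sym\<^esub> \<in> {s \<in> carrier Sym. \<forall>x\<in>E. \<forall>y\<in>E. s (op x y) = op (s x) (s y)}"
      by (simp add: BijGroup_one_apply op_closed)
  qed (auto simp: BijGroup_mult_apply BijGroup_apply_closed op_closed)
  then show ?thesis using assms by blast
qed

lemma Inn_conj_L:
  assumes s: "s \<in> Inn" and a: "a \<in> E"
  shows "s \<otimes>\<^bsub>Sym\<^esub> L a \<otimes>\<^bsub>Sym\<^esub> inv\<^bsub>Sym\<^esub> s = L (s a)"
proof (rule BijGroup_eqI)
  have sS: "s \<in> carrier Sym" using Inn_in_Sym[OF s] .
  then show "s \<otimes>\<^bsub>Sym\<^esub> L a \<otimes>\<^bsub>Sym\<^esub> inv\<^bsub>Sym\<^esub> s \<in> carrier Sym"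
    using L_in_Sym[OF a] by simp
  show "L (s a) \<in> carrier Sym" using L_in_Sym BijGroup_apply_closed[OF sS a] by blast
  fix x assume x: "x \<in> E"
  have x': "(inv\<^bsub>Sym\<^esub> s) x \<in> E" using BijGroup_apply_closed[OF Sym.inv_closed[OF sS] x] .
  have "(s \<otimes>\<^bsub>Sym\<^esub> L a \<otimes>\<^bsub>Sym\<^esub> inv\<^bsub>Sym\<^esub> s) x = s (op a ((inv\<^bsub>Sym\<^esub> s) x))"
    using sS x x' L_in_Sym[OF a] by (simp add: BijGroup_mult_apply L_apply)
  also have "\<dots> = op (s a) x"
    using Inn_automorphism[OF s a x'] BijGroup_apply_inv_apply[OF sS x] by simp
  finally show "(s \<otimes>\<^bsub>Sym\<^esub> L a \<otimes>\<^bsub>Sym\<^esub> inv\<^bsub>Sym\<^esub> s) x = L (s a) x"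
    using x by (simp add: L_apply)
qed

lemma Dis_orbit_eq_Inn_orbit:
  assumes "s \<in> Inn" "a \<in> E"
  shows "\<exists>d\<in>Dis. d a = s a"
proof -
  let ?H = "{s \<in> carrier Sym. \<forall>a\<in>E. \<exists>d\<in>Dis. d a = s a}"
  have "Inn \<subseteq> ?H"
    unfolding Inn_def
  proof (rule Sym.generate_subset_of_mult_closed[OF finite_Sym])
    show "L ` E \<subseteq> ?H"
    proof (clarify, intro conjI ballI)
      fix c a assume c: "c \<in> E" and a: "a \<in> E"
      have "L c \<otimes>\<^bsub>Sym\<^esub> inv\<^bsub>Sym\<^esub> L a \<in> Dis"
        unfolding Dis_def using a c by (intro generate.incl) blast
      moreover have "(L c \<otimes>\<^bsub>Sym\<^esub> inv\<^bsub>Sym\<^esub> L a) a = L c a"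
        using a c L_in_Sym by (simp add: BijGroup_mult_apply inv_L_fixes)
      ultimately show "\<exists>d\<in>Dis. d a = L c a" by blast
    qed (use L_in_Sym in blast)
    show "\<one>\<^bsub>Sym\<^esub> \<in> ?H"
      using Sym.one_closed subgroup.one_closed[OF subgroup_Dis] by blast
    show "?H \<subseteq> carrier Sym" by blast
    fix s t assume s: "s \<in> ?H" and t: "t \<in> ?H"
    then have st: "s \<in> carrier Sym" "t \<in> carrier Sym" by auto
    show "s \<otimes>\<^bsub>Sym\<^esub> t \<in> ?H"
    proof (intro CollectI conjI ballI)
      show "s \<otimes>\<^bsub>Sym\<^esub> t \<in> carrier Sym" using st by simp
      fix a assume a: "a \<in> E"
      obtain d where d: "d \<in> Dis" "d a = t a" using t a by auto
      have "t a \<in> E" using BijGroup_apply_closed[OF st(2) a] .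
      then obtain d' where d': "d' \<in> Dis" "d' (t a) = s (t a)" using s by auto
      have "(d' \<otimes>\<^bsub>Sym\<^esub> d) a = (s \<otimes>\<^bsub>Sym\<^esub> t) a"
        using st d d' a Dis_in_Sym by (simp add: BijGroup_mult_apply)
      then show "\<exists>d\<in>Dis. d a = (s \<otimes>\<^bsub>Sym\<^esub> t) a"
        using subgroup.m_closed[OF subgroup_Dis d'(1) d(1)] by blast
    qed
  qed
  then show ?thesis using assms by blast
qed

end

locale finite_connected_quandle = finite_quandle +
  assumes connected: "connected_quandle E op"
begin

lemma Inn_transitive:
  assumes "a \<in> E" "b \<in> E"
  shows "\<exists>s\<in>Inn. s a = b"
proof -
  have "left_translations E op = L ` E"
    by (auto simp: left_translations_def L_def)
  then show ?thesis
    using connected assms unfolding connected_quandle_def Inn_def by auto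
qed

lemma Dis_transitive: "a \<in> E \<Longrightarrow> b \<in> E \<Longrightarrow> \<exists>d\<in>Dis. d a = b"
  using Inn_transitive Dis_orbit_eq_Inn_orbit by metis

end

section \<open>Connected covers of \<open>Q(G,f)\<close>\<close>

locale QGf_cover = finite_connected_quandle E op for E :: "'e set" and op +
  fixes G :: "('a, 'm) monoid_scheme" (structure) and f :: "'a \<Rightarrow> 'a" and \<pi> :: "'e \<Rightarrow> 'a"
  assumes group_G: "group G" and finite_G: "finite (carrier G)" and f_iso: "f \<in> iso G G"
    and cover: "quandle_cover E op (carrier G) (QGf_op G f) \<pi>"
begin

sublocale G: group G by (rule group_G)

lemma f_hom: "f \<in> hom G G"
  using f_iso by (simp add: iso_def)

lemma f_funcset: "f \<in> carrier G \<rightarrow> carrier G"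
  using f_hom by (simp add: hom_def)

lemma inj_on_f: "inj_on f (carrier G)"
  using f_iso by (simp add: iso_def bij_betw_def)

lemma \<pi>_image: "\<pi> ` E = carrier G"
  using cover[unfolded quandle_cover_def, THEN conjunct2, THEN conjunct1] .

lemma \<pi>_closed: "u \<in> E \<Longrightarrow> \<pi> u \<in> carrier G"
  using \<pi>_image by blast

lemma \<pi>_op: "u \<in> E \<Longrightarrow> v \<in> E \<Longrightarrow> \<pi> (op u v) = QGf_op G f (\<pi> u) (\<pi> v)"
  using cover[unfolded quandle_cover_def, THEN conjunct2, THEN conjunct2, THEN conjunct1] by blast

lemma op_eq_if_same_fibre: "u \<in> E \<Longrightarrow> v \<in> E \<Longrightarrow> \<pi> u = \<pi> v \<Longrightarrow> w \<in> E \<Longrightarrow> op u w = op v w"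
  using cover[unfolded quandle_cover_def, THEN conjunct2, THEN conjunct2, THEN conjunct2] by blast

lemma Inn_preserves_fibres:
  assumes "s \<in> Inn" "u \<in> E" "v \<in> E"
  shows "\<pi> (s u) = \<pi> (s v) \<longleftrightarrow> \<pi> u = \<pi> v"
proof -
  let ?H = "{s \<in> carrier Sym. \<forall>u\<in>E. \<forall>v\<in>E. \<pi> (s u) = \<pi> (s v) \<longleftrightarrow> \<pi> u = \<pi> v}"
  have "Inn \<subseteq> ?H"
    unfolding Inn_def
  proof (rule Sym.generate_subset_of_mult_closed[OF finite_Sym])
    show "L ` E \<subseteq> ?H"
    proof (clarify, intro conjI ballI)
      fix a u v assume a: "a \<in> E" and uv: "u \<in> E" "v \<in> E"
      show "L a \<in> carrier Sym" using L_in_Sym[OF a] .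
      show "\<pi> (L a u) = \<pi> (L a v) \<longleftrightarrow> \<pi> u = \<pi> v"
        using QGf_op_cancel[OF group_G f_funcset inj_on_f \<pi>_closed[OF a] \<pi>_closed[OF uv(1)] \<pi>_closed[OF uv(2)]]
          uv a by (auto simp: L_apply \<pi>_op)
    qed
    show "\<one>\<^bsub>Sym\<^esub> \<in> ?H" by (simp add: BijGroup_one_apply)
    show "?H \<subseteq> carrier Sym" by blast
    fix s t assume "s \<in> ?H" "t \<in> ?H"
    then show "s \<otimes>\<^bsub>Sym\<^esub> t \<in> ?H"
      by (auto simp: BijGroup_mult_apply BijGroup_apply_closed)
  qed
  then show ?thesis using assms by blast
qed

lemma \<pi>_displacement_apply:
  assumes a: "a \<in> E" and b: "b \<in> E" and u: "u \<in> E"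
  shows "\<pi> ((L a \<otimes>\<^bsub>Sym\<^esub> inv\<^bsub>Sym\<^esub> L b) u) = (QGf_op G f (\<pi> a) (\<pi> b) \<otimes> inv \<pi> b) \<otimes> \<pi> u"
proof -
  let ?w = "(inv\<^bsub>Sym\<^esub> L b) u"
  have w: "?w \<in> E" using BijGroup_apply_closed[OF Sym.inv_closed[OF L_in_Sym[OF b]] u] .
  have "op b ?w = u" using BijGroup_apply_inv_apply[OF L_in_Sym[OF b] u] w by (simp add: L_apply)
  then have "QGf_op G f (\<pi> b) (\<pi> ?w) = \<pi> u" using \<pi>_op[OF b w] by simp
  moreover have "\<pi> ((L a \<otimes>\<^bsub>Sym\<^esub> inv\<^bsub>Sym\<^esub> L b) u) = QGf_op G f (\<pi> a) (\<pi> ?w)"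
    using a b u w L_in_Sym by (simp add: BijGroup_mult_apply L_apply \<pi>_op)
  ultimately show ?thesis
    using QGf_op_displacement[OF group_G f_hom \<pi>_closed[OF a] \<pi>_closed[OF b] \<pi>_closed[OF w]] by simp
qed

lemma Dis_acts_on_G_by_left_mult:
  assumes "d \<in> Dis"
  shows "\<exists>g\<in>carrier G. \<forall>u\<in>E. \<pi> (d u) = g \<otimes> \<pi> u"
proof -
  let ?H = "{d \<in> carrier Sym. \<exists>g\<in>carrier G. \<forall>u\<in>E. \<pi> (d u) = g \<otimes> \<pi> u}"
  have "Dis \<subseteq> ?H"
    unfolding Dis_def
  proof (rule Sym.generate_subset_of_mult_closed[OF finite_Sym])
    show "{L a \<otimes>\<^bsub>Sym\<^esub> inv\<^bsub>Sym\<^esub> L b | a b. a \<in> E \<and> b \<in> E} \<subseteq> ?H"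
    proof
      fix d assume "d \<in> {L a \<otimes>\<^bsub>Sym\<^esub> inv\<^bsub>Sym\<^esub> L b | a b. a \<in> E \<and> b \<in> E}"
      then obtain a b where a: "a \<in> E" and b: "b \<in> E" and d: "d = L a \<otimes>\<^bsub>Sym\<^esub> inv\<^bsub>Sym\<^esub> L b"
        by blast
      have "QGf_op G f (\<pi> a) (\<pi> b) \<otimes> inv \<pi> b \<in> carrier G"
        using QGf_op_closed[OF group_G f_funcset] \<pi>_closed a b by simp
      moreover have "d \<in> carrier Sym" using d a b L_in_Sym by simp
      ultimately show "d \<in> ?H" using \<pi>_displacement_apply[OF a b] d by auto
    qed
    show "\<one>\<^bsub>Sym\<^esub> \<in> ?H"
      using G.one_closed by (auto simp: BijGroup_one_apply \<pi>_closed)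
    show "?H \<subseteq> carrier Sym" by blast
    fix s t assume s: "s \<in> ?H" and t: "t \<in> ?H"
    then obtain g h where g: "g \<in> carrier G" "\<forall>u\<in>E. \<pi> (s u) = g \<otimes> \<pi> u"
      and h: "h \<in> carrier G" "\<forall>u\<in>E. \<pi> (t u) = h \<otimes> \<pi> u"
      by auto
    have "\<pi> ((s \<otimes>\<^bsub>Sym\<^esub> t) u) = (g \<otimes> h) \<otimes> \<pi> u" if "u \<in> E" for u
      using s t g h that by (auto simp: BijGroup_mult_apply BijGroup_apply_closed G.m_assoc \<pi>_closed)
    then show "s \<otimes>\<^bsub>Sym\<^esub> t \<in> ?H" using s t g(1) h(1) by auto
  qed
  then show ?thesis using assms by blast
qed

text \<open>\<open>K\<close> is the kernel of the natural map from \<open>Dis(E)\<close> to \<open>Dis(Q(G,f))\<close>.\<close>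
definition K where "K = {d \<in> Dis. \<forall>u\<in>E. \<pi> (d u) = \<pi> u}"

lemma K_in_Dis: "k \<in> K \<Longrightarrow> k \<in> Dis"
  by (simp add: K_def)

lemma K_in_Inn: "k \<in> K \<Longrightarrow> k \<in> Inn"
  using K_in_Dis Dis_subset_Inn by blast

lemma K_in_Sym: "k \<in> K \<Longrightarrow> k \<in> carrier Sym"
  using K_in_Dis Dis_in_Sym by blast

lemma \<pi>_K_apply: "k \<in> K \<Longrightarrow> u \<in> E \<Longrightarrow> \<pi> (k u) = \<pi> u"
  by (simp add: K_def)

lemma subgroup_K: "subgroup K Sym"
proof (rule Sym.finite_subgroupI[OF finite_Sym])
  show "K \<subseteq> carrier Sym" using K_in_Sym by blast
  show "\<one>\<^bsub>Sym\<^esub> \<in> K"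
    using subgroup.one_closed[OF subgroup_Dis] by (simp add: K_def BijGroup_one_apply)
  fix k l assume k: "k \<in> K" and l: "l \<in> K"
  have "\<pi> ((k \<otimes>\<^bsub>Sym\<^esub> l) u) = \<pi> u" if u: "u \<in> E" for u
    using K_in_Sym[OF k] K_in_Sym[OF l] u \<pi>_K_apply[OF k] \<pi>_K_apply[OF l]
    by (simp add: BijGroup_mult_apply BijGroup_apply_closed)
  then show "k \<otimes>\<^bsub>Sym\<^esub> l \<in> K"
    using subgroup.m_closed[OF subgroup_Dis K_in_Dis[OF k] K_in_Dis[OF l]] by (simp add: K_def)
qed

lemma finite_K: "finite K"
  using finite_subset[OF _ finite_Sym] K_in_Sym by blast

lemma K_commutes_with_Inn:
  assumes k: "k \<in> K" and "s \<in> Inn" "u \<in> E"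
  shows "k (s u) = s (k u)"
proof -
  let ?H = "{s \<in> carrier Sym. \<forall>u\<in>E. k (s u) = s (k u)}"
  have kS: "k \<in> carrier Sym" using K_in_Sym[OF k] .
  have "Inn \<subseteq> ?H"
    unfolding Inn_def
  proof (rule Sym.generate_subset_of_mult_closed[OF finite_Sym])
    show "L ` E \<subseteq> ?H"
    proof (clarify, intro conjI ballI)
      fix c u assume c: "c \<in> E" and u: "u \<in> E"
      show "L c \<in> carrier Sym" using L_in_Sym[OF c] .
      have kc: "k c \<in> E" and ku: "k u \<in> E" using BijGroup_apply_closed[OF kS] c u by auto
      have "k (L c u) = op (k c) (k u)"
        using Inn_automorphism[OF K_in_Inn[OF k] c u] u by (simp add: L_apply)
      also have "\<dots> = op c (k u)" using op_eq_if_same_fibre[OF kc c \<pi>_K_apply[OF k c] ku] .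
      finally show "k (L c u) = L c (k u)" using ku by (simp add: L_apply)
    qed
    show "\<one>\<^bsub>Sym\<^esub> \<in> ?H" using kS by (simp add: BijGroup_one_apply BijGroup_apply_closed)
    show "?H \<subseteq> carrier Sym" by blast
    fix s t assume "s \<in> ?H" "t \<in> ?H"
    then show "s \<otimes>\<^bsub>Sym\<^esub> t \<in> ?H"
      using kS by (auto simp: BijGroup_mult_apply BijGroup_apply_closed)
  qed
  then show ?thesis using assms by blast
qed

lemma K_semiregular:
  assumes k: "k \<in> K" and u: "u \<in> E" and "k u = u"
  shows "k = \<one>\<^bsub>Sym\<^esub>"
proof (rule BijGroup_eqI[OF K_in_Sym[OF k] Sym.one_closed])
  fix v assume v: "v \<in> E"
  obtain s where s: "s \<in> Inn" "s u = v" using Inn_transitive[OF u v] by blast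
  then show "k v = \<one>\<^bsub>Sym\<^esub> v"
    using K_commutes_with_Inn[OF k s(1) u] \<open>k u = u\<close> v by (simp add: BijGroup_one_apply)
qed

lemma K_eqI:
  assumes k: "k \<in> K" and l: "l \<in> K" and u: "u \<in> E" and "k u = l u"
  shows "k = l"
proof -
  have kS: "k \<in> carrier Sym" and lS: "l \<in> carrier Sym" using K_in_Sym k l by auto
  have "inv\<^bsub>Sym\<^esub> l \<otimes>\<^bsub>Sym\<^esub> k \<in> K"
    using subgroup.m_closed[OF subgroup_K subgroup.m_inv_closed[OF subgroup_K l] k] .
  moreover have "(inv\<^bsub>Sym\<^esub> l \<otimes>\<^bsub>Sym\<^esub> k) u = u"
    using \<open>k u = l u\<close> kS lS u by (simp add: BijGroup_mult_apply BijGroup_inv_apply_apply)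
  ultimately have "inv\<^bsub>Sym\<^esub> l \<otimes>\<^bsub>Sym\<^esub> k = \<one>\<^bsub>Sym\<^esub>" using K_semiregular u by blast
  then have "l \<otimes>\<^bsub>Sym\<^esub> (inv\<^bsub>Sym\<^esub> l \<otimes>\<^bsub>Sym\<^esub> k) = l" using lS by simp
  then show ?thesis using kS lS by (simp add: Sym.m_assoc[symmetric])
qed

lemma K_transitive_on_fibres:
  assumes u: "u \<in> E" and v: "v \<in> E" and "\<pi> u = \<pi> v"
  shows "\<exists>k\<in>K. k u = v"
proof -
  obtain d where d: "d \<in> Dis" "d u = v" using Dis_transitive[OF u v] by blast
  obtain g where g: "g \<in> carrier G" "\<forall>w\<in>E. \<pi> (d w) = g \<otimes> \<pi> w"
    using Dis_acts_on_G_by_left_mult[OF d(1)] by blast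
  have "g = \<one>"
    using g(2)[rule_format, OF u] d(2) \<open>\<pi> u = \<pi> v\<close> g(1) \<pi>_closed[OF v] by simp
  then have "d \<in> K" using d(1) g(2) \<pi>_closed by (simp add: K_def)
  then show ?thesis using d(2) by blast
qed

abbreviation KG where "KG \<equiv> Sym\<lparr>carrier := K\<rparr>"

sublocale KG: comm_group KG
proof (rule group.group_comm_groupI)
  show "group KG" using subgroup.subgroup_is_group[OF subgroup_K Sym.is_group] .
  fix k l assume "k \<in> carrier KG" "l \<in> carrier KG"
  then have k: "k \<in> K" and l: "l \<in> K" by simp_all
  have "k \<otimes>\<^bsub>Sym\<^esub> l = l \<otimes>\<^bsub>Sym\<^esub> k"
    using K_in_Sym[OF k] K_in_Sym[OF l]
    by (intro BijGroup_eqI[where S = E]) (simp_all add: BijGroup_mult_apply K_commutes_with_Inn[OF k K_in_Inn[OF l]])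
  then show "k \<otimes>\<^bsub>KG\<^esub> l = l \<otimes>\<^bsub>KG\<^esub> k" by simp
qed

definition lift :: "'a \<Rightarrow> 'e" where "lift x = (SOME u. u \<in> E \<and> \<pi> u = x)"

lemma lift: "x \<in> carrier G \<Longrightarrow> lift x \<in> E \<and> \<pi> (lift x) = x"
  unfolding lift_def by (rule someI_ex) (use \<pi>_image in force)

lemma lift_in_E: "x \<in> carrier G \<Longrightarrow> lift x \<in> E"
  using lift by blast

lemma \<pi>_lift: "x \<in> carrier G \<Longrightarrow> \<pi> (lift x) = x"
  using lift by blast

lemma card_E: "card E = card (carrier G) * card K"
proof -
  have "bij_betw (\<lambda>(x, k). k (lift x)) (carrier G \<times> K) E"
  proof (rule bij_betw_imageI)
    show "inj_on (\<lambda>(x, k). k (lift x)) (carrier G \<times> K)"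
    proof (rule inj_onI, clarify)
      fix x k y l assume x: "x \<in> carrier G" and k: "k \<in> K" and y: "y \<in> carrier G" and l: "l \<in> K"
        and eq: "k (lift x) = l (lift y)"
      have "x = y"
        using arg_cong[OF eq, of \<pi>] by (simp add: \<pi>_K_apply k l lift_in_E \<pi>_lift x y)
      then show "x = y \<and> k = l" using K_eqI[OF k l lift_in_E[OF x]] eq by simp
    qed
    show "(\<lambda>(x, k). k (lift x)) ` (carrier G \<times> K) = E"
    proof
      show "(\<lambda>(x, k). k (lift x)) ` (carrier G \<times> K) \<subseteq> E"
        using BijGroup_apply_closed[OF K_in_Sym lift_in_E] by auto
      show "E \<subseteq> (\<lambda>(x, k). k (lift x)) ` (carrier G \<times> K)"
      proof
        fix u assume u: "u \<in> E"
        then obtain k where "k \<in> K" "k (lift (\<pi> u)) = u"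
          using K_transitive_on_fibres lift_in_E \<pi>_lift \<pi>_closed by metis
        then show "u \<in> (\<lambda>(x, k). k (lift x)) ` (carrier G \<times> K)"
          using \<pi>_closed[OF u] by (auto intro!: image_eqI[where x = "(\<pi> u, k)"])
      qed
    qed
  qed
  then show ?thesis by (metis bij_betw_same_card card_cartesian_product)
qed

definition deck :: "'e \<Rightarrow> 'e \<Rightarrow> 'e \<Rightarrow> 'e" where "deck u v = (THE k. k \<in> K \<and> k u = v)"

lemma deck_eqI: "k \<in> K \<Longrightarrow> u \<in> E \<Longrightarrow> k u = v \<Longrightarrow> deck u v = k"
  unfolding deck_def by (rule the_equality) (auto intro: K_eqI)

lemma deck:
  assumes "u \<in> E" "v \<in> E" "\<pi> u = \<pi> v"
  shows "deck u v \<in> K" and "deck u v u = v"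
proof -
  obtain k where "k \<in> K" "k u = v" using K_transitive_on_fibres[OF assms] by blast
  moreover from this have "deck u v = k" using deck_eqI assms(1) by blast
  ultimately show "deck u v \<in> K" "deck u v u = v" by simp_all
qed

definition induced :: "('e \<Rightarrow> 'e) \<Rightarrow> 'a \<Rightarrow> 'a" where "induced s x = \<pi> (s (lift x))"

lemma \<pi>_Inn_apply: "s \<in> Inn \<Longrightarrow> u \<in> E \<Longrightarrow> \<pi> (s u) = induced s (\<pi> u)"
  unfolding induced_def
  using Inn_preserves_fibres[of s u "lift (\<pi> u)"] by (simp add: lift_in_E \<pi>_lift \<pi>_closed)

lemma Inn_apply_closed: "s \<in> Inn \<Longrightarrow> u \<in> E \<Longrightarrow> s u \<in> E"
  using BijGroup_apply_closed[OF Inn_in_Sym] .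

lemma induced_closed: "s \<in> Inn \<Longrightarrow> x \<in> carrier G \<Longrightarrow> induced s x \<in> carrier G"
  unfolding induced_def by (simp add: \<pi>_closed Inn_apply_closed lift_in_E)

lemma induced_mult:
  "s \<in> Inn \<Longrightarrow> t \<in> Inn \<Longrightarrow> x \<in> carrier G \<Longrightarrow> induced (s \<otimes>\<^bsub>Sym\<^esub> t) x = induced s (induced t x)"
  using \<pi>_Inn_apply[of s "t (lift x)"]
  by (simp add: induced_def[of "s \<otimes>\<^bsub>Sym\<^esub> t"] induced_def[of t] BijGroup_mult_apply Inn_in_Sym
      lift_in_E Inn_apply_closed)

lemma induced_K: "k \<in> K \<Longrightarrow> x \<in> carrier G \<Longrightarrow> induced k x = x"
  by (simp add: induced_def \<pi>_K_apply lift_in_E \<pi>_lift)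

lemma bij_betw_induced: "s \<in> Inn \<Longrightarrow> bij_betw (induced s) (carrier G) (carrier G)"
proof -
  assume s: "s \<in> Inn"
  have "inj_on (induced s) (carrier G)"
  proof (rule inj_onI)
    fix x y assume "x \<in> carrier G" "y \<in> carrier G" "induced s x = induced s y"
    then show "x = y"
      using Inn_preserves_fibres[OF s, of "lift x" "lift y"] by (simp add: induced_def lift_in_E \<pi>_lift)
  qed
  then show ?thesis
    using endo_inj_surj[OF finite_G _ \<open>inj_on _ _\<close>] induced_closed[OF s]
    by (auto simp: bij_betw_def)
qed

text \<open>The lifts form a transversal of the fibres, that is of the \<open>K\<close>-orbits, so \<open>transfer\<close> below
  is the classical transfer of \<open>Inn(E)\<close> into its central subgroup \<open>K\<close>.\<close>
definition transfer_factor :: "('e \<Rightarrow> 'e) \<Rightarrow> 'a \<Rightarrow> 'e \<Rightarrow> 'e" where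
  "transfer_factor s x = deck (lift (induced s x)) (s (lift x))"

lemma transfer_factor:
  assumes "s \<in> Inn" "x \<in> carrier G"
  shows "transfer_factor s x \<in> K" and "transfer_factor s x (lift (induced s x)) = s (lift x)"
proof -
  have "s (lift x) \<in> E" using assms by (simp add: Inn_apply_closed lift_in_E)
  moreover have "\<pi> (lift (induced s x)) = \<pi> (s (lift x))"
    using \<pi>_lift[OF induced_closed[OF assms]] by (simp add: induced_def)
  ultimately show "transfer_factor s x \<in> K" "transfer_factor s x (lift (induced s x)) = s (lift x)"
    unfolding transfer_factor_def using deck lift_in_E induced_closed assms by auto
qed

lemma transfer_factor_mult:
  assumes s: "s \<in> Inn" and t: "t \<in> Inn" and x: "x \<in> carrier G"
  shows "transfer_factor (s \<otimes>\<^bsub>Sym\<^esub> t) x = transfer_factor t x \<otimes>\<^bsub>Sym\<^esub> transfer_factor s (induced t x)"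
proof -
  define y where "y = induced t x"
  have y: "y \<in> carrier G" unfolding y_def using induced_closed[OF t x] .
  have k: "transfer_factor t x \<in> K" and l: "transfer_factor s y \<in> K"
    using transfer_factor(1) s t x y by auto
  have "(transfer_factor t x \<otimes>\<^bsub>Sym\<^esub> transfer_factor s y) (lift (induced s y))
      = transfer_factor t x (s (lift y))"
    using transfer_factor(2)[OF s y] K_in_Sym[OF k] K_in_Sym[OF l] induced_closed[OF s y]
    by (simp add: BijGroup_mult_apply lift_in_E)
  also have "\<dots> = s (transfer_factor t x (lift y))"
    using K_commutes_with_Inn[OF k s lift_in_E[OF y]] .
  also have "\<dots> = (s \<otimes>\<^bsub>Sym\<^esub> t) (lift x)"
    using transfer_factor(2)[OF t x] s t x
    by (simp add: y_def BijGroup_mult_apply Inn_in_Sym lift_in_E)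
  finally have "deck (lift (induced s y)) ((s \<otimes>\<^bsub>Sym\<^esub> t) (lift x))
      = transfer_factor t x \<otimes>\<^bsub>Sym\<^esub> transfer_factor s y"
    using subgroup.m_closed[OF subgroup_K k l] induced_closed[OF s y]
    by (intro deck_eqI) (simp_all add: lift_in_E)
  then show ?thesis
    by (simp add: transfer_factor_def induced_mult s t x y_def)
qed

lemma transfer_factor_K: "k \<in> K \<Longrightarrow> x \<in> carrier G \<Longrightarrow> transfer_factor k x = k"
  unfolding transfer_factor_def by (rule deck_eqI) (simp_all add: induced_K lift_in_E)

definition transfer :: "('e \<Rightarrow> 'e) \<Rightarrow> 'e \<Rightarrow> 'e" where
  "transfer s = finprod KG (transfer_factor s) (carrier G)"

lemma transfer_in_K: "s \<in> Inn \<Longrightarrow> transfer s \<in> K"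
  unfolding transfer_def using KG.finprod_closed[of "transfer_factor s"] transfer_factor(1) by auto

lemma transfer_mult:
  assumes s: "s \<in> Inn" and t: "t \<in> Inn"
  shows "transfer (s \<otimes>\<^bsub>Sym\<^esub> t) = transfer s \<otimes>\<^bsub>Sym\<^esub> transfer t"
proof -
  have tf_t: "transfer_factor t \<in> carrier G \<rightarrow> carrier KG"
    and tf_s: "(\<lambda>x. transfer_factor s (induced t x)) \<in> carrier G \<rightarrow> carrier KG"
    using transfer_factor(1) s t induced_closed by auto
  have "transfer (s \<otimes>\<^bsub>Sym\<^esub> t)
      = finprod KG (\<lambda>x. transfer_factor t x \<otimes>\<^bsub>KG\<^esub> transfer_factor s (induced t x)) (carrier G)"
    unfolding transfer_def
    using tf_t tf_s KG.m_closed
    by (intro KG.finprod_cong') (auto simp: transfer_factor_mult s t simp del: KG.m_closed)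
  also have "\<dots> = transfer t \<otimes>\<^bsub>KG\<^esub> finprod KG (\<lambda>x. transfer_factor s (induced t x)) (carrier G)"
    unfolding transfer_def using tf_t tf_s by (rule KG.finprod_multf)
  also have "finprod KG (\<lambda>x. transfer_factor s (induced t x)) (carrier G) = transfer s"
    using KG.finprod_reindex[of "transfer_factor s" "induced t" "carrier G"]
      bij_betw_induced[OF t] transfer_factor(1)[OF s]
    by (auto simp: transfer_def bij_betw_def)
  finally show ?thesis
    using KG.m_comm transfer_in_K s t by simp
qed

lemma transfer_K:
  assumes "k \<in> K"
  shows "transfer k = k [^]\<^bsub>KG\<^esub> card (carrier G)"
proof -
  have "transfer k = finprod KG (\<lambda>x. k) (carrier G)"
    unfolding transfer_def using assms by (intro KG.finprod_cong') (auto simp: transfer_factor_K)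
  then show ?thesis using assms by (simp add: KG.finprod_const)
qed

lemma transfer_one: "transfer \<one>\<^bsub>Sym\<^esub> = \<one>\<^bsub>Sym\<^esub>"
  using transfer_K[OF subgroup.one_closed[OF subgroup_K]] KG.nat_pow_one by simp

lemma transfer_L_eq:
  assumes a: "a \<in> E" and b: "b \<in> E"
  shows "transfer (L a) = transfer (L b)"
proof -
  obtain s where s: "s \<in> Inn" "s b = a" using Inn_transitive[OF b a] by blast
  have s': "inv\<^bsub>Sym\<^esub> s \<in> Inn" using subgroup.m_inv_closed[OF subgroup_Inn s(1)] .
  have Lb: "L b \<in> Inn" using L_in_Inn[OF b] .
  have "transfer (L a) = transfer (s \<otimes>\<^bsub>Sym\<^esub> L b \<otimes>\<^bsub>Sym\<^esub> inv\<^bsub>Sym\<^esub> s)"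
    using Inn_conj_L[OF s(1) b] s(2) by simp
  also have "\<dots> = transfer (L b) \<otimes>\<^bsub>Sym\<^esub> transfer (s \<otimes>\<^bsub>Sym\<^esub> inv\<^bsub>Sym\<^esub> s)"
    using s(1) s' Lb transfer_in_K subgroup.m_closed[OF subgroup_Inn]
      KG.m_comm[of "transfer s" "transfer (L b)"]
      KG.m_assoc[of "transfer (L b)" "transfer s" "transfer (inv\<^bsub>Sym\<^esub> s)"]
    by (simp add: transfer_mult del: Sym.r_inv)
  also have "\<dots> = transfer (L b)"
    using Inn_in_Sym[OF s(1)] transfer_in_K[OF Lb] transfer_one KG.r_one by simp
  finally show ?thesis .
qed

lemma transfer_Dis:
  assumes "d \<in> Dis"
  shows "transfer d = \<one>\<^bsub>Sym\<^esub>"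
proof -
  let ?H = "{s \<in> Inn. transfer s = \<one>\<^bsub>Sym\<^esub>}"
  have "Dis \<subseteq> ?H"
    unfolding Dis_def
  proof (rule Sym.generate_subset_of_mult_closed[OF finite_Sym])
    show "{L a \<otimes>\<^bsub>Sym\<^esub> inv\<^bsub>Sym\<^esub> L b | a b. a \<in> E \<and> b \<in> E} \<subseteq> ?H"
    proof
      fix d assume "d \<in> {L a \<otimes>\<^bsub>Sym\<^esub> inv\<^bsub>Sym\<^esub> L b | a b. a \<in> E \<and> b \<in> E}"
      then obtain a b where a: "a \<in> E" and b: "b \<in> E" and d: "d = L a \<otimes>\<^bsub>Sym\<^esub> inv\<^bsub>Sym\<^esub> L b"
        by blast
      have Lb': "inv\<^bsub>Sym\<^esub> L b \<in> Inn" using subgroup.m_inv_closed[OF subgroup_Inn L_in_Inn[OF b]] .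
      have "d \<in> Inn" using d subgroup.m_closed[OF subgroup_Inn L_in_Inn[OF a] Lb'] by simp
      moreover have "transfer d = transfer (L b \<otimes>\<^bsub>Sym\<^esub> inv\<^bsub>Sym\<^esub> L b)"
        using d a b Lb' L_in_Inn by (simp add: transfer_mult transfer_L_eq[OF a b] del: Sym.r_inv)
      ultimately show "d \<in> ?H" using L_in_Sym[OF b] transfer_one by simp
    qed
    show "\<one>\<^bsub>Sym\<^esub> \<in> ?H" using subgroup.one_closed[OF subgroup_Inn] transfer_one by simp
    show "?H \<subseteq> carrier Sym" using Inn_in_Sym by blast
    fix s t assume "s \<in> ?H" "t \<in> ?H"
    then show "s \<otimes>\<^bsub>Sym\<^esub> t \<in> ?H"
      using subgroup.m_closed[OF subgroup_Inn] by (simp add: transfer_mult)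
  qed
  then show ?thesis using assms by blast
qed

lemma K_exponent: "k \<in> K \<Longrightarrow> k [^]\<^bsub>KG\<^esub> card (carrier G) = \<one>\<^bsub>KG\<^esub>"
  using transfer_K transfer_Dis K_in_Dis by simp

lemma prime_dvd_card_K: "Factorial_Ring.prime p \<Longrightarrow> p dvd card K \<Longrightarrow> p dvd card (carrier G)"
  using KG.prime_dvd_order_dvd_exponent[of "card (carrier G)" p] finite_K K_exponent
  by (simp add: order_def)

end

theorem proposition3p10:
  fixes G :: "('a, 'm) monoid_scheme" and f :: "'a \<Rightarrow> 'a"
    and E :: "'e set" and opE :: "'e \<Rightarrow> 'e \<Rightarrow> 'e" and \<pi> :: "'e \<Rightarrow> 'a"
  assumes "group G" and "finite (carrier G)" and "nilpotent_group G"
    and "f \<in> iso G G"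
    and "finite E"
    and "connected_cover E opE (carrier G) (QGf_op G f) \<pi>"
  shows "rad (card E) = rad (card (carrier G))"
proof -
  have cover: "quandle_cover E opE (carrier G) (QGf_op G f) \<pi>"
    and connected: "connected_quandle E opE"
    using assms(6) unfolding connected_cover_def by auto
  have "quandle E opE"
    using cover[unfolded quandle_cover_def, THEN conjunct1] .
  interpret QGf_cover E opE G f \<pi>
    using assms(1,2,4,5) cover connected \<open>quandle E opE\<close>
    by (intro QGf_cover.intro QGf_cover_axioms.intro finite_connected_quandle.intro
        finite_connected_quandle_axioms.intro finite_quandle.intro)
  have "card (carrier G) \<noteq> 0"
    using assms(2) G.one_closed by auto
  moreover have "card K \<noteq> 0"
    using finite_K subgroup.one_closed[OF subgroup_K] by auto
  ultimately show ?thesis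
    using card_E rad_mult_eq prime_dvd_card_K by simp
qed

end
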